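(* Let $\psi : [0,\infty) \to [0,\infty)$ be a measurable function such that $0 < 1/c_d := \int_0^\infty u^d \psi(u)\,{\rm d}u < \infty$ for all integers $d \ge 1$, and assume $\psi$ does not have compact support. Assume there is $u_\ddagger$ such that on $[u_\ddagger, \infty)$ the function $\Lambda(u) := -\log \psi(u)$ is differentiable and $L(u) := u \Lambda'(u)$ is increasing; that $M(u) := L(u)/\log u \to \infty$ as $u \to \infty$; and that for every $\varepsilon \in (0,1)$, $\limsup_{u\to\infty} M((1-\varepsilon)u)/M(u) \le 1$ and $\liminf_{u\to\infty} M((1+\varepsilon)u)/M(u) \ge 1$. Let $u_d := L^{-1}(d)$. Assume further that $L$ is differentiable, that $\nu_d := u_d L'(u_d) \to \infty$ as $d\to\infty$, and that there is a sequence $\omega_d \to \infty$ such that $$\big|L(u_d) - L((1-\varepsilon)u_d) - \varepsilon u_d L'(u_d)\big| \le |\varepsilon|\,\nu_d/\omega_d \quad \text{whenever } \varepsilon^2 \le \omega_d/\nu_d.$$ Then $$\frac{1}{c_d} \sim \sqrt{\frac{2\pi}{\nu_d}}\; u_d^{d+1}\,\psi(u_d), \quad d \to \infty.$$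
   Context: $L^{-1}$ denotes the inverse of the increasing function $L$ on $[u_\ddagger,\infty)$, so $L(u_d)=d$ for $d$ large. $a_d \sim b_d$ means $a_d/b_d \to 1$. *)

theory Defs
  imports "HOL-Analysis.Analysis" "HOL-Library.Landau_Symbols"
begin

end

theory Submission
  imports Defs "HOL-Probability.Probability" "HOL-Real_Asymp.Real_Asymp"
begin

text \<open>Laplace's method. Write \<open>x ^ d * \<psi> x = exp (F\<^sub>d x)\<close> with \<open>F\<^sub>d x = d * ln x - \<Lambda> x\<close>; then
\<open>F\<^sub>d' x = (d - L x) / x\<close>, so the integrand increases up to \<open>u\<^sub>d\<close> and decreases afterwards.
On the scale \<open>c\<^sub>d = u\<^sub>d / sqrt \<nu>\<^sub>d\<close> the local condition gives
\<open>F\<^sub>d (u\<^sub>d + c\<^sub>d t) - F\<^sub>d u\<^sub>d = - t\<^sup>2 / 2 + o(1)\<close> uniformly for \<open>\<bar>t\<bar>\<close> below a width \<open>S\<^sub>d \<longrightarrow> \<infinity>\<close>,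
and dominated convergence (with majorant \<open>exp (- t\<^sup>2 / 4)\<close>) turns the integral over this window into
\<open>c\<^sub>d * exp (F\<^sub>d u\<^sub>d) * sqrt (2 * pi) * (1 + o(1))\<close>. At the ends of the window \<open>L\<close> already differs
from \<open>d\<close> by at least \<open>S\<^sub>d * sqrt \<nu>\<^sub>d / 2\<close>, so by monotonicity of \<open>L\<close> the integrand decays like a power
of \<open>x\<close> of that order beyond them, and both tails are \<open>O(1 / S\<^sub>d)\<close> relative to the main term. The part
below a fixed \<open>a > u\<^sub>d\<^sub>d\<close>, where nothing is known about \<open>\<psi>\<close> but integrability, is exponentially
small because the peak value is at least \<open>(2a) ^ d * \<psi> (2a)\<close>.\<close>

subsection \<open>Calculus and integration\<close>

lemma exp_le_exp_mult_powr_of_deriv_ge: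
  fixes F F' :: "real \<Rightarrow> real"
  assumes "0 < y" "y \<le> z"
    and deriv: "\<And>w. y \<le> w \<Longrightarrow> w \<le> z \<Longrightarrow> (F has_real_derivative F' w) (at w)"
    and bound: "\<And>w. y \<le> w \<Longrightarrow> w \<le> z \<Longrightarrow> k / w \<le> F' w"
  shows "exp (F y) \<le> exp (F z) * (y / z) powr k"
proof -
  have "F y - k * ln y \<le> F z - k * ln z"
  proof (rule DERIV_nonneg_imp_increasing_open[OF \<open>y \<le> z\<close>])
    fix w assume w: "y < w" "w < z"
    have "((\<lambda>w. F w - k * ln w) has_real_derivative F' w - k * (1 / w)) (at w)"
      using deriv[of w] w \<open>0 < y\<close> by (auto intro!: derivative_eq_intros)
    moreover have "0 \<le> F' w - k * (1 / w)"
      using bound[of w] w by simp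
    ultimately show "\<exists>D. ((\<lambda>w. F w - k * ln w) has_real_derivative D) (at w) \<and> 0 \<le> D"
      by blast
  next
    have "isCont (\<lambda>w. F w - k * ln w) w" if "w \<in> {y..z}" for w
      using that deriv[of w, THEN DERIV_isCont] \<open>0 < y\<close> by (auto intro!: continuous_intros)
    then show "continuous_on {y..z} (\<lambda>w. F w - k * ln w)"
      by (intro continuous_at_imp_continuous_on) blast
  qed
  then have "exp (F y) \<le> exp (F z + k * (ln y - ln z))"
    by (simp add: algebra_simps)
  also have "\<dots> = exp (F z) * (y / z) powr k"
    using assms(1,2) by (simp add: exp_add powr_def ln_div mult.commute)
  finally show ?thesis .
qed

lemma exp_le_exp_mult_powr_of_deriv_le:
  fixes F F' :: "real \<Rightarrow> real"
  assumes "0 < x" "x \<le> y"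
    and deriv: "\<And>w. x \<le> w \<Longrightarrow> w \<le> y \<Longrightarrow> (F has_real_derivative F' w) (at w)"
    and bound: "\<And>w. x \<le> w \<Longrightarrow> w \<le> y \<Longrightarrow> F' w \<le> - k / w"
  shows "exp (F y) \<le> exp (F x) * (x / y) powr k"
proof -
  have "exp (- F x) \<le> exp (- F y) * (x / y) powr k"
    using assms(1,2) by (rule exp_le_exp_mult_powr_of_deriv_ge)
      (use deriv bound in \<open>force intro!: derivative_eq_intros\<close>)+
  then have "exp (F y) * exp (- F x) \<le> exp (F y) * (exp (- F y) * (x / y) powr k)"
    by (simp add: mult_left_mono)
  then show ?thesis
    by (simp add: exp_minus field_simps)
qed

lemma abs_diff_le_of_deriv_bound:
  fixes G G' :: "real \<Rightarrow> real"
  assumes deriv: "\<And>y. y \<in> closed_segment x z \<Longrightarrow> (G has_real_derivative G' y) (at y)"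
    and bound: "\<And>y. y \<in> closed_segment x z \<Longrightarrow> \<bar>G' y\<bar> \<le> B"
  shows "\<bar>G x - G z\<bar> \<le> B * \<bar>x - z\<bar>"
proof -
  have *: "\<bar>G x - G z\<bar> \<le> B * \<bar>x - z\<bar>" if "x < z"
    "\<And>y. y \<in> closed_segment x z \<Longrightarrow> (G has_real_derivative G' y) (at y)"
    "\<And>y. y \<in> closed_segment x z \<Longrightarrow> \<bar>G' y\<bar> \<le> B" for x z
  proof -
    have "\<And>y. x \<le> y \<Longrightarrow> y \<le> z \<Longrightarrow> (G has_real_derivative G' y) (at y)"
      using that(1,2) by (simp add: closed_segment_eq_real_ivl)
    then obtain w where w: "x < w" "w < z" "G z - G x = (z - x) * G' w"
      using MVT2[OF \<open>x < z\<close>] by blast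
    have "\<bar>G x - G z\<bar> = \<bar>(z - x) * G' w\<bar>"
      using w(3) by (simp add: abs_minus_commute)
    also have "\<dots> = \<bar>G' w\<bar> * \<bar>x - z\<bar>"
      by (simp add: abs_mult abs_minus_commute)
    also have "\<dots> \<le> B * \<bar>x - z\<bar>"
      using that(3)[of w] w by (intro mult_right_mono) (auto simp: closed_segment_eq_real_ivl)
    finally show ?thesis .
  qed
  consider "x < z" | "x = z" | "z < x" by linarith
  then show ?thesis
  proof cases
    case 1 then show ?thesis using * deriv bound by blast
  next
    case 2 then show ?thesis by simp
  next
    case 3 then show ?thesis
      using *[of z x] deriv bound by (simp add: closed_segment_commute abs_minus_commute)
  qed
qed

lemma set_integral_le_of_powr_majorant_left:
  fixes f :: "real \<Rightarrow> real"
  assumes "0 \<le> a" "a \<le> y" "0 \<le> k" "0 \<le> C"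
    and f: "set_integrable lborel {a..y} f"
    and major: "\<And>w. a \<le> w \<Longrightarrow> w \<le> y \<Longrightarrow> f w \<le> C * (w / y) powr k"
  shows "(LBINT w:{a..y}. f w) \<le> C * y / (k + 1)"
proof -
  define g where "g w = C * y powr (- k) * w powr k" for w
  have "((\<lambda>w. w powr k) has_integral y powr (k + 1) / (k + 1)) {0..y}"
    using assms by (intro has_integral_powr_from_0) auto
  then have "(g has_integral C * y powr (- k) * (y powr (k + 1) / (k + 1))) {0..y}"
    unfolding g_def by (rule has_integral_mult_right)
  moreover have "y powr (- k) * y powr (k + 1) = y"
    using assms by (cases "y = 0") (auto simp: powr_add[symmetric])
  ultimately have g0: "(g has_integral C * y / (k + 1)) {0..y}"
    by (metis (no_types, lifting) mult.assoc times_divide_eq_right)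
  have g: "g integrable_on {a..y}"
    using integrable_on_subinterval[OF has_integral_integrable[OF g0]] assms by auto
  have "f w \<le> g w" if "a \<le> w" "w \<le> y" for w
    using major[OF that] unfolding g_def powr_divide powr_minus by (simp add: divide_inverse mult_ac)
  have "(LBINT w:{a..y}. f w) = integral {a..y} f"
    using set_borel_integral_eq_integral[OF f] by simp
  also have "\<dots> \<le> integral {a..y} g"
    using set_borel_integral_eq_integral(1)[OF f] g \<open>\<And>w. a \<le> w \<Longrightarrow> w \<le> y \<Longrightarrow> f w \<le> g w\<close>
    by (intro integral_le) auto
  also have "\<dots> \<le> integral {0..y} g"
    using g has_integral_integrable[OF g0] assms
    by (intro integral_subset_le) (auto simp: g_def)
  also have "\<dots> = C * y / (k + 1)"
    using g0 by (rule integral_unique)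
  finally show ?thesis .
qed

lemma set_integral_le_of_powr_majorant_right:
  fixes f :: "real \<Rightarrow> real"
  assumes "0 < x" "1 < k"
    and f: "set_integrable lborel {x..} f"
    and major: "\<And>w. x \<le> w \<Longrightarrow> f w \<le> C * (x / w) powr k"
  shows "(LBINT w:{x..}. f w) \<le> C * x / (k - 1)"
proof -
  define g where "g w = C * x powr k * w powr (- k)" for w
  have "((\<lambda>w. w powr (- k)) has_integral - (x powr (- k + 1)) / (- k + 1)) {x..}"
    using assms by (intro has_integral_powr_to_inf) auto
  then have "(g has_integral C * x powr k * (- (x powr (- k + 1)) / (- k + 1))) {x..}"
    unfolding g_def by (rule has_integral_mult_right)
  moreover have "C * x powr k * (- (x powr (- k + 1)) / (- k + 1)) = C * (x powr k * x powr (- k + 1)) / (k - 1)"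
    using assms by (simp add: divide_simps) (simp add: algebra_simps)
  moreover have "x powr k * x powr (- k + 1) = x"
    using assms by (simp add: powr_add[symmetric])
  ultimately have g: "(g has_integral C * x / (k - 1)) {x..}"
    by simp
  have "f w \<le> g w" if "x \<le> w" for w
    using major[OF that] unfolding g_def powr_divide powr_minus by (simp add: divide_inverse mult_ac)
  have "(LBINT w:{x..}. f w) = integral {x..} f"
    using set_borel_integral_eq_integral[OF f] by simp
  also have "\<dots> \<le> integral {x..} g"
    using set_borel_integral_eq_integral(1)[OF f] has_integral_integrable[OF g] \<open>\<And>w. x \<le> w \<Longrightarrow> f w \<le> g w\<close>
    by (intro integral_le) auto
  also have "\<dots> = C * x / (k - 1)"
    using g by (rule integral_unique)
  finally show ?thesis .
qed

lemma integral_dominated_convergence_eventually: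
  fixes s :: "nat \<Rightarrow> real \<Rightarrow> real"
  assumes "f \<in> borel_measurable lborel" "integrable lborel w"
    and "\<And>x. (\<lambda>i. s i x) \<longlonglongrightarrow> f x"
    and "eventually (\<lambda>i. s i \<in> borel_measurable lborel \<and> (\<forall>x. \<bar>s i x\<bar> \<le> w x)) sequentially"
  shows "(\<lambda>i. integral\<^sup>L lborel (s i)) \<longlonglongrightarrow> integral\<^sup>L lborel f"
proof -
  obtain N where N: "\<And>i. N \<le> i \<Longrightarrow> s i \<in> borel_measurable lborel \<and> (\<forall>x. \<bar>s i x\<bar> \<le> w x)"
    using assms(4) by (auto simp: eventually_sequentially)
  have "(\<lambda>i. integral\<^sup>L lborel (s (i + N))) \<longlonglongrightarrow> integral\<^sup>L lborel f"
  proof (rule integral_dominated_convergence[where w = w])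
    show "AE x in lborel. (\<lambda>i. s (i + N) x) \<longlonglongrightarrow> f x"
      using assms(3) by (intro AE_I2 LIMSEQ_ignore_initial_segment)
    show "AE x in lborel. norm (s (i + N) x) \<le> w x" "s (i + N) \<in> borel_measurable lborel" for i
      using N[of "i + N"] by auto
  qed (use assms in auto)
  then show ?thesis
    by (rule LIMSEQ_offset)
qed

lemma lborel_integral_exp_neg_square_half: "(\<integral>x. exp (- x\<^sup>2 / 2) \<partial>lborel) = sqrt (2 * pi)"
proof -
  have "(\<integral>x. exp (- x\<^sup>2 / 2) \<partial>lborel) = (\<integral>x. sqrt (2 * pi) * std_normal_density x \<partial>lborel)"
    by (simp add: std_normal_density_def)
  then show ?thesis
    by simp
qed

lemma integrable_exp_neg_square_quarter: "integrable lborel (\<lambda>x::real. exp (- x\<^sup>2 / 4))"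
proof -
  have "integrable lborel (\<lambda>x. sqrt (4 * pi) * normal_density 0 (sqrt 2) x)"
    by simp
  moreover have "(\<lambda>x. sqrt (4 * pi) * normal_density 0 (sqrt 2) x) = (\<lambda>x. exp (- x\<^sup>2 / 4))"
    by (auto simp: normal_density_def real_sqrt_mult)
  ultimately show ?thesis
    by simp
qed

lemma set_integral_nonneg:
  fixes f :: "real \<Rightarrow> real"
  assumes "\<And>x. x \<in> A \<Longrightarrow> 0 \<le> f x"
  shows "0 \<le> (LBINT x:A. f x)"
  unfolding set_lebesgue_integral_def
  by (intro integral_nonneg_AE AE_I2) (use assms in \<open>auto simp: indicator_def\<close>)

lemma set_integral_pow_le_first_moment:
  fixes \<psi> :: "real \<Rightarrow> real"
  assumes "1 \<le> n" "0 \<le> a" "\<And>x. 0 \<le> x \<Longrightarrow> 0 \<le> \<psi> x"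
    and "set_integrable lborel {0..} (\<lambda>x. x ^ n * \<psi> x)" "set_integrable lborel {0..} (\<lambda>x. x * \<psi> x)"
  shows "(LBINT x:{0..<a}. x ^ n * \<psi> x) \<le> a ^ (n - 1) * (LBINT x:{0..}. x * \<psi> x)"
proof -
  have "(LBINT x:{0..<a}. x ^ n * \<psi> x) \<le> (LBINT x:{0..<a}. a ^ (n - 1) * (x * \<psi> x))"
  proof (rule set_integral_mono)
    show "set_integrable lborel {0..<a} (\<lambda>x. x ^ n * \<psi> x)"
      by (rule set_integrable_subset[OF assms(4)]) auto
    show "set_integrable lborel {0..<a} (\<lambda>x. a ^ (n - 1) * (x * \<psi> x))"
      by (intro set_integrable_mult_right set_integrable_subset[OF assms(5)]) auto
    fix x assume x: "x \<in> {0..<a}"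
    have "x ^ n = x * x ^ (n - 1)"
      using assms(1) by (simp add: power_eq_if)
    also have "\<dots> \<le> x * a ^ (n - 1)"
      using x by (intro mult_left_mono power_mono) auto
    finally have "x ^ n * \<psi> x \<le> x * a ^ (n - 1) * \<psi> x"
      using assms(3)[of x] x by (intro mult_right_mono) auto
    then show "x ^ n * \<psi> x \<le> a ^ (n - 1) * (x * \<psi> x)"
      by (simp add: mult_ac)
  qed
  also have "\<dots> \<le> a ^ (n - 1) * (LBINT x:{0..}. x * \<psi> x)"
  proof -
    have "(LBINT x:{0..}. x * \<psi> x) = (LBINT x:{0..<a}. x * \<psi> x) + (LBINT x:{a..}. x * \<psi> x)"
      using assms(2) by (subst ivl_disj_un_one(8)[symmetric, of 0 a]) (auto intro!: set_integral_Un set_integrable_subset[OF assms(5)])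
    moreover have "0 \<le> (LBINT x:{a..}. x * \<psi> x)"
      using assms(2,3) by (intro set_integral_nonneg) auto
    ultimately show ?thesis
      using assms(2) by (simp add: mult_left_mono)
  qed
  finally show ?thesis .
qed

lemma filterlim_at_top_of_mono_on_comp:
  fixes L :: "real \<Rightarrow> real"
  assumes "mono_on {a..} L" "eventually (\<lambda>n. a \<le> u n) F" "filterlim (\<lambda>n. L (u n)) at_top F"
  shows "filterlim u at_top F"
proof (subst filterlim_at_top, intro allI)
  fix B
  have "eventually (\<lambda>n. L (max B a) < L (u n)) F"
    using assms(3) by (simp add: filterlim_at_top_dense)
  with assms(2) show "eventually (\<lambda>n. B \<le> u n) F"
  proof eventually_elim
    case (elim n)
    then show ?case
      using mono_onD[OF assms(1), of "u n" "max B a"] by force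
  qed
qed

subsection \<open>A single moment near its peak\<close>

text \<open>The parameter \<open>\<nu>\<close> stands for \<open>u * L' u\<close> and enters only through the local condition; the numerical
lower bounds on \<open>u\<close>, \<open>\<nu>\<close> and \<open>\<omega>\<close> hold for all large \<open>n\<close>.\<close>

locale laplace_window =
  fixes \<psi> L :: "real \<Rightarrow> real" and a :: real and n :: nat and u \<nu> \<omega> :: real
  assumes psi_meas: "set_borel_measurable lborel {0..} \<psi>"
    and psi_nonneg: "\<And>x. 0 \<le> x \<Longrightarrow> 0 \<le> \<psi> x"
    and psi_pos: "\<And>x. a \<le> x \<Longrightarrow> 0 < \<psi> x"
    and a_ge_1: "1 \<le> a"
    and log_psi_deriv: "\<And>x. a \<le> x \<Longrightarrow> ((\<lambda>x. ln (\<psi> x)) has_real_derivative - L x / x) (at x)"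
    and L_mono: "mono_on {a..} L"
    and moment_integrable: "set_integrable lborel {0..} (\<lambda>x. x ^ n * \<psi> x)"
    and first_moment_integrable: "set_integrable lborel {0..} (\<lambda>x. x * \<psi> x)"
    and n_ge_1: "1 \<le> n"
    and u_ge: "8 * a \<le> u"
    and L_u: "L u = n"
    and nu_ge: "2 ^ 14 \<le> \<nu>"
    and omega_ge: "64 \<le> \<omega>"
    and L_local: "\<And>\<epsilon>. \<epsilon>\<^sup>2 \<le> \<omega> / \<nu> \<Longrightarrow> \<bar>L u - L ((1 - \<epsilon>) * u) - \<epsilon> * \<nu>\<bar> \<le> \<bar>\<epsilon>\<bar> * \<nu> / \<omega>"
begin

definition width :: real where "width = min (sqrt \<omega>) (sqrt \<nu> / 16)"
definition scale :: real where "scale = u / sqrt \<nu>"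
definition decay :: real where "decay = width * sqrt \<nu> / 2"
definition peak :: real where "peak = u ^ n * \<psi> u"
definition log_integrand :: "real \<Rightarrow> real" where "log_integrand y = n * ln y + ln (\<psi> y)"
text \<open>The factor \<open>indicator {0..}\<close> is \<open>1\<close> on the window; it is there because \<open>\<psi>\<close> is only known to be
measurable on \<open>{0..}\<close>.\<close>

definition profile :: "real \<Rightarrow> real" where
  "profile t = indicator {-width<..<width} t * (indicator {0..} (u + scale * t) * \<psi> (u + scale * t))
     * (u + scale * t) ^ n / peak"

lemma nu_pos: "0 < \<nu>" and omega_pos: "0 < \<omega>" and nu_nonneg: "0 \<le> \<nu>" and omega_nonneg: "0 \<le> \<omega>"
  using nu_ge omega_ge by auto

lemma sqrt_nu_ge: "128 \<le> sqrt \<nu>"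
  using nu_ge by (intro real_le_rsqrt) simp

lemma width_ge: "8 \<le> width"
proof -
  have "8 \<le> sqrt \<omega>"
    using omega_ge by (intro real_le_rsqrt) simp
  moreover have "8 \<le> sqrt \<nu> / 16"
    using sqrt_nu_ge by simp
  ultimately show ?thesis
    unfolding width_def by (rule min.boundedI)
qed

lemma width_le: "width \<le> sqrt \<nu> / 16" "width\<^sup>2 \<le> \<omega>"
proof -
  show "width \<le> sqrt \<nu> / 16"
    by (simp add: width_def)
  have "width\<^sup>2 \<le> (sqrt \<omega>)\<^sup>2"
    using width_ge nu_nonneg omega_nonneg by (intro power_mono) (auto simp: width_def)
  then show "width\<^sup>2 \<le> \<omega>"
    using omega_pos by simp
qed

lemma u_pos: "0 < u" and scale_pos: "0 < scale"
  using u_ge a_ge_1 nu_pos by (auto simp: scale_def)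

lemma scale_width_le: "scale * width \<le> u / 16"
proof -
  have "scale * width \<le> scale * (sqrt \<nu> / 16)"
    using width_le scale_pos by (intro mult_left_mono) auto
  also have "\<dots> = u / 16"
    using nu_pos by (simp add: scale_def)
  finally show ?thesis .
qed

lemma decay_ge: "4 * sqrt \<nu> \<le> decay"
  using mult_right_mono[OF width_ge, of "sqrt \<nu>"] nu_nonneg by (simp add: decay_def)

lemma peak_pos: "0 < peak"
  using u_pos u_ge a_ge_1 psi_pos by (simp add: peak_def)

lemma has_real_derivative_log_integrand:
  assumes "a \<le> y"
  shows "(log_integrand has_real_derivative (n - L y) / y) (at y)"
proof -
  have "0 < y"
    using assms a_ge_1 by simp
  then have "((\<lambda>y. n * ln y) has_real_derivative n * (1 / y)) (at y)"
    by (auto intro!: derivative_eq_intros)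
  from DERIV_add[OF this log_psi_deriv[OF assms]]
  have "(log_integrand has_real_derivative n * (1 / y) + - L y / y) (at y)"
    unfolding log_integrand_def .
  then show ?thesis
    by (simp add: diff_divide_distrib)
qed

lemma exp_log_integrand: "a \<le> y \<Longrightarrow> exp (log_integrand y) = y ^ n * \<psi> y"
  using psi_pos[of y] a_ge_1 by (simp add: log_integrand_def exp_add exp_of_nat_mult)

text \<open>The local condition in the rescaled coordinate \<open>y = u + scale * s\<close>, i.e.\ \<open>\<epsilon> = - s / sqrt \<nu>\<close>.\<close>

lemma L_window:
  assumes "\<bar>s\<bar> \<le> width"
  shows "\<bar>n - L (u + scale * s) + s * sqrt \<nu>\<bar> \<le> \<bar>s\<bar> * sqrt \<nu> / \<omega>"
proof -
  define \<epsilon> where "\<epsilon> = - s / sqrt \<nu>"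
  have "\<epsilon>\<^sup>2 = s\<^sup>2 / \<nu>"
    using nu_ge by (simp add: \<epsilon>_def power_divide)
  also have "\<dots> \<le> \<omega> / \<nu>"
    using width_le(2) abs_le_square_iff[of s width] assms width_ge nu_ge
    by (intro divide_right_mono) auto
  finally have "\<bar>L u - L ((1 - \<epsilon>) * u) - \<epsilon> * \<nu>\<bar> \<le> \<bar>\<epsilon>\<bar> * \<nu> / \<omega>"
    by (rule L_local)
  moreover have "(1 - \<epsilon>) * u = u + scale * s"
    using nu_pos by (simp add: \<epsilon>_def scale_def field_simps)
  moreover have "\<epsilon> * \<nu> = - s * (\<nu> / sqrt \<nu>)" "\<bar>\<epsilon>\<bar> * \<nu> / \<omega> = \<bar>s\<bar> * (\<nu> / sqrt \<nu>) / \<omega>"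
    using nu_nonneg by (simp_all add: \<epsilon>_def abs_div)
  moreover have "\<nu> / sqrt \<nu> = sqrt \<nu>"
    using nu_nonneg by (rule real_div_sqrt)
  ultimately show ?thesis
    using L_u by simp
qed

lemma L_window_ends: "L (u - scale * width) \<le> n - decay" "n + decay \<le> L (u + scale * width)"
proof -
  have "width * sqrt \<nu> / \<omega> \<le> width * sqrt \<nu> / 2"
    using width_ge nu_nonneg omega_ge by (intro divide_left_mono mult_nonneg_nonneg) auto
  moreover have "\<bar>n - L (u - scale * width) - width * sqrt \<nu>\<bar> \<le> width * sqrt \<nu> / \<omega>"
    using L_window[of "- width"] width_ge by simp
  moreover have "\<bar>n - L (u + scale * width) + width * sqrt \<nu>\<bar> \<le> width * sqrt \<nu> / \<omega>"
    using L_window[of width] width_ge by simp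
  ultimately show "L (u - scale * width) \<le> n - decay" "n + decay \<le> L (u + scale * width)"
    unfolding decay_def abs_le_iff by linarith+
qed

lemma integrand_le_peak:
  assumes "a \<le> y"
  shows "y ^ n * \<psi> y \<le> peak"
proof (cases "y \<le> u")
  case True
  have "exp (log_integrand y) \<le> exp (log_integrand u) * (y / u) powr 0"
  proof (rule exp_le_exp_mult_powr_of_deriv_ge[OF _ True])
    fix w assume w: "y \<le> w" "w \<le> u"
    show "(log_integrand has_real_derivative (n - L w) / w) (at w)"
      using w assms by (intro has_real_derivative_log_integrand) simp
    show "0 / w \<le> (n - L w) / w"
      using mono_onD[OF L_mono, of w u] w assms L_u a_ge_1 by simp
  qed (use assms a_ge_1 in simp)
  then show ?thesis
    using exp_log_integrand[OF assms] exp_log_integrand[of u] assms True u_pos a_ge_1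
    by (simp add: peak_def)
next
  case False
  have "exp (log_integrand y) \<le> exp (log_integrand u) * (u / y) powr 0"
  proof (rule exp_le_exp_mult_powr_of_deriv_le[OF u_pos])
    fix w assume w: "u \<le> w" "w \<le> y"
    show "(log_integrand has_real_derivative (n - L w) / w) (at w)"
      using w u_ge a_ge_1 by (intro has_real_derivative_log_integrand) simp
    show "(n - L w) / w \<le> - 0 / w"
      using mono_onD[OF L_mono, of u w] w u_ge a_ge_1 L_u by (simp add: divide_nonpos_pos)
  qed (use False in simp)
  then show ?thesis
    using exp_log_integrand[OF assms] exp_log_integrand[of u] u_ge a_ge_1 False
    by (simp add: peak_def)
qed

lemma window_ends_ge: "u / 2 \<le> u - scale * width" "a \<le> u - scale * width"
  using scale_width_le u_ge a_ge_1 by auto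

lemma left_tail_le:
  assumes "a \<le> y" "y \<le> u - scale * width"
  shows "y ^ n * \<psi> y \<le> peak * (y / (u - scale * width)) powr decay"
proof -
  let ?l = "u - scale * width"
  have "exp (log_integrand y) \<le> exp (log_integrand ?l) * (y / ?l) powr decay"
  proof (rule exp_le_exp_mult_powr_of_deriv_ge[OF _ assms(2)])
    fix w assume w: "y \<le> w" "w \<le> ?l"
    show "(log_integrand has_real_derivative (n - L w) / w) (at w)"
      using w assms by (intro has_real_derivative_log_integrand) simp
    have "L w \<le> L ?l"
      using mono_onD[OF L_mono] w assms by simp
    then show "decay / w \<le> (n - L w) / w"
      using L_window_ends(1) w assms a_ge_1 by (intro divide_right_mono) auto
  qed (use assms a_ge_1 in simp)
  also have "\<dots> \<le> peak * (y / ?l) powr decay"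
    using integrand_le_peak[of ?l] exp_log_integrand[of ?l] window_ends_ge by (intro mult_right_mono) auto
  finally show ?thesis
    using exp_log_integrand[OF assms(1)] by simp
qed

lemma right_tail_le:
  assumes "u + scale * width \<le> y"
  shows "y ^ n * \<psi> y \<le> peak * ((u + scale * width) / y) powr decay"
proof -
  let ?r = "u + scale * width"
  have r: "a \<le> ?r" "0 < ?r"
    using window_ends_ge a_ge_1 mult_pos_pos[OF scale_pos, of width] width_ge by linarith+
  have "exp (log_integrand y) \<le> exp (log_integrand ?r) * (?r / y) powr decay"
  proof (rule exp_le_exp_mult_powr_of_deriv_le[OF r(2) assms])
    fix w assume w: "?r \<le> w" "w \<le> y"
    show "(log_integrand has_real_derivative (n - L w) / w) (at w)"
      using w r by (intro has_real_derivative_log_integrand) simp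
    have "L ?r \<le> L w"
      using mono_onD[OF L_mono] w r by simp
    then show "(n - L w) / w \<le> - decay / w"
      using L_window_ends(2) w r by (intro divide_right_mono) auto
  qed
  also have "\<dots> \<le> peak * (?r / y) powr decay"
    using integrand_le_peak[of ?r] exp_log_integrand[of ?r] r by (intro mult_right_mono) auto
  finally show ?thesis
    using exp_log_integrand[of y] assms r by simp
qed

lemma left_tail_integral_le:
  "(LBINT x:{a..u - scale * width}. x ^ n * \<psi> x) \<le> 2 / width * (peak * scale)"
proof -
  let ?l = "u - scale * width"
  have "(LBINT x:{a..?l}. x ^ n * \<psi> x) \<le> peak * ?l / (decay + 1)"
    using window_ends_ge a_ge_1 peak_pos decay_ge sqrt_nu_ge
    by (intro set_integral_le_of_powr_majorant_left left_tail_le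
        set_integrable_subset[OF moment_integrable]) auto
  also have "\<dots> \<le> peak * u / decay"
    using peak_pos decay_ge sqrt_nu_ge scale_pos width_ge u_pos
    by (intro frac_le mult_left_mono) (auto intro: mult_nonneg_nonneg)
  also have "\<dots> = 2 / width * (peak * scale)"
    using width_ge nu_pos by (simp add: decay_def scale_def field_simps)
  finally show ?thesis .
qed

lemma right_tail_integral_le:
  "(LBINT x:{u + scale * width..}. x ^ n * \<psi> x) \<le> 8 / width * (peak * scale)"
proof -
  let ?r = "u + scale * width"
  have "(LBINT x:{?r..}. x ^ n * \<psi> x) \<le> peak * ?r / (decay - 1)"
    using u_pos scale_pos width_ge decay_ge sqrt_nu_ge
    by (intro set_integral_le_of_powr_majorant_right right_tail_le
        set_integrable_subset[OF moment_integrable]) (auto intro: add_pos_nonneg)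
  also have "\<dots> \<le> peak * (2 * u) / (decay / 2)"
    using peak_pos decay_ge sqrt_nu_ge scale_width_le u_pos
    by (intro frac_le mult_left_mono) auto
  also have "\<dots> = 8 / width * (peak * scale)"
    using width_ge nu_pos by (simp add: decay_def scale_def field_simps)
  finally show ?thesis .
qed


lemma initial_integral_le:
  "(LBINT x:{0..<a}. x ^ n * \<psi> x)
     \<le> (LBINT x:{0..}. x * \<psi> x) / (a * \<psi> (2 * a)) * ((n + \<bar>L a\<bar>) / 2 ^ n) * (peak * scale)"
proof -
  define J where "J = (LBINT x:{0..}. x * \<psi> x)"
  define m where "m = n + \<bar>L a\<bar>"
  have J: "0 \<le> J"
    unfolding J_def using psi_nonneg by (intro set_integral_nonneg) auto
  have psi_2a: "0 < \<psi> (2 * a)"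
    using psi_pos a_ge_1 by simp
  have "4 * sqrt \<nu> \<le> m"
  proof -
    have "L a \<le> L (u - scale * width)"
      using mono_onD[OF L_mono] window_ends_ge a_ge_1 by simp
    then show ?thesis
      using decay_ge L_window_ends(1) by (simp add: m_def)
  qed
  moreover have "4 * sqrt \<nu> * 1 \<le> m * u"
    using calculation sqrt_nu_ge u_ge a_ge_1 by (intro mult_mono) auto
  ultimately have m: "0 < m" "sqrt \<nu> \<le> m * u"
    using sqrt_nu_ge by linarith+
  then have "1 / m \<le> scale"
    using nu_pos by (simp add: scale_def field_simps)
  have "(LBINT x:{0..<a}. x ^ n * \<psi> x) \<le> a ^ (n - 1) * J"
    unfolding J_def using n_ge_1 a_ge_1 psi_nonneg moment_integrable first_moment_integrable
    by (intro set_integral_pow_le_first_moment) auto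
  also have "\<dots> = J / (a * \<psi> (2 * a)) * (m / 2 ^ n) * ((2 * a) ^ n * \<psi> (2 * a) * (1 / m))"
    using n_ge_1 a_ge_1 psi_2a m(1)
    by (cases n) (auto simp: power_mult_distrib field_simps)
  also have "\<dots> \<le> J / (a * \<psi> (2 * a)) * (m / 2 ^ n) * (peak * scale)"
    using J psi_2a m \<open>1 / m \<le> scale\<close> a_ge_1 peak_pos integrand_le_peak[of "2 * a"]
    by (intro mult_left_mono mult_mono) auto
  finally show ?thesis
    unfolding J_def m_def .
qed

lemma deriv_bound_near_peak:
  assumes "\<bar>s\<bar> \<le> width"
  shows "\<bar>scale * ((n - L (u + scale * s)) / (u + scale * s)) + s\<bar> \<le> 2 * \<bar>s\<bar> / \<omega> + 2 * s\<^sup>2 / sqrt \<nu>"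
proof -
  define q where "q = sqrt \<nu>"
  define D where "D = n - L (u + scale * s)"
  have q: "0 < q" "q / 2 \<le> q + s"
    using assms width_le(1) nu_pos by (auto simp: q_def abs_le_iff)
  have u: "u = scale * q"
    using nu_pos by (simp add: q_def scale_def)
  moreover have "0 < scale * (q + s)"
    using scale_pos q by simp
  ultimately have "scale * (D / (u + scale * s)) + s = (D + s * q + s\<^sup>2) / (q + s)"
    using q by (simp add: field_simps power2_eq_square)
  also have "\<bar>\<dots>\<bar> \<le> (\<bar>s\<bar> * q / \<omega> + s\<^sup>2) / (q + s)"
  proof -
    have "\<bar>D + s * q + s\<^sup>2\<bar> \<le> \<bar>s\<bar> * q / \<omega> + s\<^sup>2"
      using L_window[OF assms] abs_triangle_ineq[of "D + s * q" "s\<^sup>2"]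
      unfolding q_def[symmetric] D_def[symmetric] by simp
    then show ?thesis
      using q by (simp add: abs_divide divide_right_mono)
  qed
  also have "\<dots> \<le> (\<bar>s\<bar> * q / \<omega> + s\<^sup>2) / (q / 2)"
    using q omega_pos by (intro divide_left_mono) auto
  also have "\<dots> = 2 * \<bar>s\<bar> / \<omega> + 2 * s\<^sup>2 / q"
    using q by (simp add: field_simps)
  finally show ?thesis
    by (simp add: q_def D_def)
qed

lemma log_integrand_near_peak:
  assumes "\<bar>t\<bar> \<le> width"
  shows "\<bar>log_integrand (u + scale * t) - log_integrand u + t\<^sup>2 / 2\<bar> \<le> 2 * t\<^sup>2 / \<omega> + 2 * \<bar>t\<bar> ^ 3 / sqrt \<nu>"
proof -
  define G where "G s = log_integrand (u + scale * s) + s\<^sup>2 / 2" for s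
  define B where "B = 2 * \<bar>t\<bar> / \<omega> + 2 * t\<^sup>2 / sqrt \<nu>"
  have "\<bar>G t - G 0\<bar> \<le> B * \<bar>t - 0\<bar>"
  proof (rule abs_diff_le_of_deriv_bound)
    fix s assume "s \<in> closed_segment t 0"
    then have s: "\<bar>s\<bar> \<le> \<bar>t\<bar>"
      by (auto simp: closed_segment_eq_real_ivl split: if_splits)
    then have "\<bar>scale * s\<bar> \<le> scale * width"
      using assms scale_pos by (simp add: abs_mult)
    then have "a \<le> u + scale * s"
      using window_ends_ge by (auto simp: abs_le_iff)
    have "((\<lambda>s. u + scale * s) has_real_derivative scale) (at s)"
      by (auto intro!: derivative_eq_intros)
    from DERIV_chain2[OF has_real_derivative_log_integrand[OF \<open>a \<le> u + scale * s\<close>] this]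
    have "((\<lambda>s. log_integrand (u + scale * s)) has_real_derivative
        (n - L (u + scale * s)) / (u + scale * s) * scale) (at s)" .
    moreover have "((\<lambda>s. s\<^sup>2 / 2) has_real_derivative s) (at s)"
      by (auto intro!: derivative_eq_intros)
    ultimately show "(G has_real_derivative scale * ((n - L (u + scale * s)) / (u + scale * s)) + s) (at s)"
      unfolding G_def by (auto dest: DERIV_add simp: mult.commute)
    have "2 * \<bar>s\<bar> / \<omega> + 2 * s\<^sup>2 / sqrt \<nu> \<le> B"
      using s omega_pos nu_pos abs_le_square_iff[of s t] unfolding B_def
      by (intro add_mono divide_right_mono) auto
    then show "\<bar>scale * ((n - L (u + scale * s)) / (u + scale * s)) + s\<bar> \<le> B"
      using deriv_bound_near_peak[of s] s assms by linarith
  qed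
  then show ?thesis
    by (simp add: G_def B_def field_simps power2_eq_square power3_eq_cube abs_mult)
qed


lemma profile_eq:
  assumes "\<bar>t\<bar> < width"
  shows "profile t = exp (log_integrand (u + scale * t) - log_integrand u)"
proof -
  have "\<bar>scale * t\<bar> \<le> scale * width"
    using assms scale_pos by (simp add: abs_mult)
  then have y: "a \<le> u + scale * t"
    using window_ends_ge by (auto simp: abs_le_iff)
  then have "profile t = exp (log_integrand (u + scale * t)) / exp (log_integrand u)"
    using assms a_ge_1 u_ge exp_log_integrand[OF y] exp_log_integrand[of u]
    by (simp add: profile_def peak_def abs_less_iff mult_ac)
  then show ?thesis
    by (simp add: exp_diff)
qed

lemma profile_bound: "\<bar>profile t\<bar> \<le> exp (- t\<^sup>2 / 4)"
proof (cases "\<bar>t\<bar> < width")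
  case True
  have "2 * \<bar>t\<bar> ^ 3 / sqrt \<nu> = 2 * t\<^sup>2 * (\<bar>t\<bar> / sqrt \<nu>)"
    by (simp add: power2_eq_square power3_eq_cube)
  also have "\<dots> \<le> 2 * t\<^sup>2 * (1 / 16)"
    using True width_le(1) nu_pos by (intro mult_left_mono) (auto simp: field_simps)
  finally have "2 * \<bar>t\<bar> ^ 3 / sqrt \<nu> \<le> t\<^sup>2 / 8"
    by simp
  moreover have "2 * t\<^sup>2 / \<omega> \<le> 2 * t\<^sup>2 / 64"
    using omega_ge by (intro divide_left_mono) auto
  moreover have "\<bar>log_integrand (u + scale * t) - log_integrand u + t\<^sup>2 / 2\<bar> \<le> 2 * t\<^sup>2 / \<omega> + 2 * \<bar>t\<bar> ^ 3 / sqrt \<nu>"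
    using True by (intro log_integrand_near_peak) simp
  ultimately have "log_integrand (u + scale * t) - log_integrand u \<le> - t\<^sup>2 / 4"
    unfolding abs_le_iff by linarith
  then show ?thesis
    using profile_eq[OF True] by simp
next
  case False
  then have "t \<notin> {-width<..<width}"
    by auto
  then show ?thesis
    by (simp add: profile_def)
qed

lemma profile_measurable: "profile \<in> borel_measurable lborel"
proof -
  have [measurable]: "(\<lambda>x. indicator {0..} x * \<psi> x) \<in> borel_measurable borel"
    using psi_meas by (simp add: set_borel_measurable_def)
  show ?thesis
    unfolding profile_def by measurable
qed

lemma central_integral_eq:
  "(LBINT x:{u - scale * width<..<u + scale * width}. x ^ n * \<psi> x) = peak * scale * integral\<^sup>L lborel profile"
proof -
  have "(LBINT x:{u - scale * width<..<u + scale * width}. x ^ n * \<psi> x)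
      = scale * (\<integral>t. indicator {u - scale * width<..<u + scale * width} (u + scale * t)
          * ((u + scale * t) ^ n * \<psi> (u + scale * t)) \<partial>lborel)"
    unfolding set_lebesgue_integral_def
    using lborel_integral_real_affine[where c = scale and t = u
        and f = "\<lambda>x. indicator {u - scale * width<..<u + scale * width} x * (x ^ n * \<psi> x)"] scale_pos
    by simp
  also have "(\<lambda>t. indicator {u - scale * width<..<u + scale * width} (u + scale * t)
      * ((u + scale * t) ^ n * \<psi> (u + scale * t))) = (\<lambda>t. peak * profile t)"
  proof
    fix t
    have iff: "u + scale * t \<in> {u - scale * width<..<u + scale * width} \<longleftrightarrow> t \<in> {-width<..<width}"
      using mult_less_cancel_left_pos[OF scale_pos, of "- width" t]
        mult_less_cancel_left_pos[OF scale_pos, of t width] by auto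
    show "indicator {u - scale * width<..<u + scale * width} (u + scale * t)
        * ((u + scale * t) ^ n * \<psi> (u + scale * t)) = peak * profile t"
    proof (cases "t \<in> {-width<..<width}")
      case True
      then have "0 \<le> u + scale * t"
        using iff window_ends_ge a_ge_1 by auto
      then show ?thesis
        using True iff peak_pos by (simp add: profile_def)
    next
      case False
      then show ?thesis
        using iff by (simp add: profile_def)
    qed
  qed
  finally show ?thesis
    by simp
qed

lemma moment_split:
  "(LBINT x:{0..}. x ^ n * \<psi> x)
     = (LBINT x:{0..<a}. x ^ n * \<psi> x) + (LBINT x:{a..u - scale * width}. x ^ n * \<psi> x)
       + (LBINT x:{u - scale * width<..<u + scale * width}. x ^ n * \<psi> x)
       + (LBINT x:{u + scale * width..}. x ^ n * \<psi> x)"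
proof -
  let ?l = "u - scale * width" and ?r = "u + scale * width" and ?f = "\<lambda>x. x ^ n * \<psi> x"
  have ends: "0 \<le> a" "a \<le> ?l" "?l < ?r"
    using window_ends_ge a_ge_1 scale_pos width_ge by auto
  have int: "set_integrable lborel A ?f" if "A \<subseteq> {0..}" "A \<in> sets lborel" for A
    using set_integrable_subset[OF moment_integrable] that by blast
  have "(LBINT x:{?l<..<?r} \<union> {?r..}. ?f x) = (LBINT x:{?l<..<?r}. ?f x) + (LBINT x:{?r..}. ?f x)"
    using ends by (intro set_integral_Un int) auto
  moreover have "(LBINT x:{a..?l} \<union> ({?l<..<?r} \<union> {?r..}). ?f x)
      = (LBINT x:{a..?l}. ?f x) + (LBINT x:{?l<..<?r} \<union> {?r..}. ?f x)"
    using ends by (intro set_integral_Un int) auto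
  moreover have "(LBINT x:{0..<a} \<union> ({a..?l} \<union> ({?l<..<?r} \<union> {?r..})). ?f x)
      = (LBINT x:{0..<a}. ?f x) + (LBINT x:{a..?l} \<union> ({?l<..<?r} \<union> {?r..}). ?f x)"
    using ends by (intro set_integral_Un int) auto
  moreover have "{0..} = {0..<a} \<union> ({a..?l} \<union> ({?l<..<?r} \<union> {?r..}))"
    using ends by auto
  ultimately show ?thesis
    by (simp only: add.assoc)
qed

end

subsection \<open>The sequence of moments\<close>

locale laplace_sequence =
  fixes \<psi> L :: "real \<Rightarrow> real" and a :: real and u \<nu> \<omega> :: "nat \<Rightarrow> real"
  assumes psi_meas: "set_borel_measurable lborel {0..} \<psi>"
    and psi_nonneg: "\<And>x. 0 \<le> x \<Longrightarrow> 0 \<le> \<psi> x"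
    and psi_pos: "\<And>x. a \<le> x \<Longrightarrow> 0 < \<psi> x"
    and a_ge_1: "1 \<le> a"
    and log_psi_deriv: "\<And>x. a \<le> x \<Longrightarrow> ((\<lambda>x. ln (\<psi> x)) has_real_derivative - L x / x) (at x)"
    and L_mono: "mono_on {a..} L"
    and moments_integrable: "\<And>d. 1 \<le> d \<Longrightarrow> set_integrable lborel {0..} (\<lambda>x. x ^ d * \<psi> x)"
    and u_top: "filterlim u at_top sequentially"
    and L_u: "eventually (\<lambda>d. L (u d) = d) sequentially"
    and nu_top: "filterlim \<nu> at_top sequentially"
    and omega_top: "filterlim \<omega> at_top sequentially"
    and L_local: "eventually (\<lambda>d. \<forall>\<epsilon>. \<epsilon>\<^sup>2 \<le> \<omega> d / \<nu> d \<longrightarrow>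
        \<bar>L (u d) - L ((1 - \<epsilon>) * u d) - \<epsilon> * \<nu> d\<bar> \<le> \<bar>\<epsilon>\<bar> * \<nu> d / \<omega> d) sequentially"
begin

abbreviation window :: "nat \<Rightarrow> bool" where
  "window d \<equiv> laplace_window \<psi> L a d (u d) (\<nu> d) (\<omega> d)"

abbreviation window_width :: "nat \<Rightarrow> real" where
  "window_width d \<equiv> laplace_window.width (\<nu> d) (\<omega> d)"

abbreviation window_radius :: "nat \<Rightarrow> real" where
  "window_radius d \<equiv> laplace_window.scale (u d) (\<nu> d) * window_width d"

abbreviation window_profile :: "nat \<Rightarrow> real \<Rightarrow> real" where
  "window_profile d \<equiv> laplace_window.profile \<psi> d (u d) (\<nu> d) (\<omega> d)"

abbreviation normalizer :: "nat \<Rightarrow> real" where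
  "normalizer d \<equiv> laplace_window.peak \<psi> d (u d) * laplace_window.scale (u d) (\<nu> d)"

lemma eventually_window: "eventually window sequentially"
proof -
  have "eventually (\<lambda>d. 8 * a \<le> u d \<and> 2 ^ 14 \<le> \<nu> d \<and> 64 \<le> \<omega> d \<and> 1 \<le> d) sequentially"
    using u_top nu_top omega_top
    by (intro eventually_conj eventually_ge_at_top) (auto simp: filterlim_at_top)
  with L_u L_local show ?thesis
  proof eventually_elim
    case (elim d)
    show ?case
      by unfold_locales
        (use elim psi_meas psi_nonneg psi_pos a_ge_1 log_psi_deriv L_mono moments_integrable
          moments_integrable[of 1] in auto)
  qed
qed

lemma window_width_tendsto: "filterlim window_width at_top sequentially"
proof (subst filterlim_at_top, intro allI)
  fix Z
  have "eventually (\<lambda>d. Z \<le> sqrt (\<omega> d)) sequentially" "eventually (\<lambda>d. 16 * Z \<le> sqrt (\<nu> d)) sequentially"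
    using filterlim_compose[OF sqrt_at_top omega_top] filterlim_compose[OF sqrt_at_top nu_top]
    by (auto simp: filterlim_at_top)
  with eventually_window show "eventually (\<lambda>d. Z \<le> window_width d) sequentially"
    by eventually_elim (auto simp: laplace_window.width_def)
qed

lemma near_peak_error_tendsto: "(\<lambda>d. 2 * t\<^sup>2 / \<omega> d + 2 * \<bar>t\<bar> ^ 3 / sqrt (\<nu> d)) \<longlonglongrightarrow> 0"
proof -
  have "(\<lambda>d. 2 * t\<^sup>2 * inverse (\<omega> d) + 2 * \<bar>t\<bar> ^ 3 * inverse (sqrt (\<nu> d))) \<longlonglongrightarrow> 2 * t\<^sup>2 * 0 + 2 * \<bar>t\<bar> ^ 3 * 0"
    using tendsto_inverse_0_at_top[OF omega_top] tendsto_inverse_0_at_top[OF filterlim_compose[OF sqrt_at_top nu_top]]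
    by (intro tendsto_add tendsto_mult_left) (simp_all add: o_def)
  then show ?thesis
    by (simp add: divide_inverse)
qed

lemma window_profile_tendsto: "(\<lambda>d. window_profile d t) \<longlonglongrightarrow> exp (- t\<^sup>2 / 2)"
proof -
  define \<Delta> where "\<Delta> d = laplace_window.log_integrand \<psi> d (u d + laplace_window.scale (u d) (\<nu> d) * t)
      - laplace_window.log_integrand \<psi> d (u d)" for d
  have "eventually (\<lambda>d. \<bar>t\<bar> < window_width d) sequentially"
    using window_width_tendsto by (simp add: filterlim_at_top_dense)
  with eventually_window have ev: "eventually (\<lambda>d. window d \<and> \<bar>t\<bar> < window_width d) sequentially"
    by (rule eventually_conj)
  have "(\<lambda>d. 2 * t\<^sup>2 / \<omega> d + 2 * \<bar>t\<bar> ^ 3 / sqrt (\<nu> d)) \<longlonglongrightarrow> 0"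
    by (rule near_peak_error_tendsto)
  moreover have "eventually (\<lambda>d. norm (\<Delta> d + t\<^sup>2 / 2) \<le> 2 * t\<^sup>2 / \<omega> d + 2 * \<bar>t\<bar> ^ 3 / sqrt (\<nu> d)) sequentially"
    using ev
  proof eventually_elim
    case (elim d)
    interpret laplace_window \<psi> L a d "u d" "\<nu> d" "\<omega> d"
      using elim by simp
    show ?case
      using log_integrand_near_peak[of t] elim by (simp add: \<Delta>_def)
  qed
  ultimately have "(\<lambda>d. \<Delta> d + t\<^sup>2 / 2) \<longlonglongrightarrow> 0"
    by (rule Lim_null_comparison[rotated])
  then have "(\<lambda>d. exp (\<Delta> d + t\<^sup>2 / 2 - t\<^sup>2 / 2)) \<longlonglongrightarrow> exp (0 - t\<^sup>2 / 2)"
    by (intro tendsto_exp tendsto_diff tendsto_const)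
  moreover have "eventually (\<lambda>d. exp (\<Delta> d + t\<^sup>2 / 2 - t\<^sup>2 / 2) = window_profile d t) sequentially"
    using ev
  proof eventually_elim
    case (elim d)
    interpret laplace_window \<psi> L a d "u d" "\<nu> d" "\<omega> d"
      using elim by simp
    show ?case
      using profile_eq[of t] elim by (simp add: \<Delta>_def)
  qed
  ultimately show ?thesis
    by (simp add: Lim_transform_eventually)
qed

lemma window_profile_integral_tendsto: "(\<lambda>d. integral\<^sup>L lborel (window_profile d)) \<longlonglongrightarrow> sqrt (2 * pi)"
proof -
  have "(\<lambda>d. integral\<^sup>L lborel (window_profile d)) \<longlonglongrightarrow> (\<integral>t. exp (- t\<^sup>2 / 2) \<partial>lborel)"
  proof (rule integral_dominated_convergence_eventually)
    show "(\<lambda>t::real. exp (- t\<^sup>2 / 2)) \<in> borel_measurable lborel"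
      by measurable
    show "eventually (\<lambda>d. window_profile d \<in> borel_measurable lborel
        \<and> (\<forall>t. \<bar>window_profile d t\<bar> \<le> exp (- t\<^sup>2 / 4))) sequentially"
      using eventually_window
    proof eventually_elim
      case (elim d)
      show ?case
        using laplace_window.profile_measurable[OF elim] laplace_window.profile_bound[OF elim] by simp
    qed
  qed (use integrable_exp_neg_square_quarter window_profile_tendsto in auto)
  then show ?thesis
    using lborel_integral_exp_neg_square_half by simp
qed

lemma normalized_initial_integral_tendsto:
  "(\<lambda>d. (LBINT x:{0..<a}. x ^ d * \<psi> x) / normalizer d) \<longlonglongrightarrow> 0"
proof (rule Lim_null_comparison)
  define K where "K = (LBINT x:{0..}. x * \<psi> x) / (a * \<psi> (2 * a))"
  show "eventually (\<lambda>d. norm ((LBINT x:{0..<a}. x ^ d * \<psi> x) / normalizer d)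
      \<le> K * ((d + \<bar>L a\<bar>) / 2 ^ d)) sequentially"
    using eventually_window
  proof eventually_elim
    case (elim d)
    have "0 \<le> (LBINT x:{0..<a}. x ^ d * \<psi> x)"
      using psi_nonneg by (intro set_integral_nonneg) auto
    moreover have "0 < normalizer d"
      using laplace_window.peak_pos[OF elim] laplace_window.scale_pos[OF elim] by simp
    ultimately show ?case
      using laplace_window.initial_integral_le[OF elim] by (simp add: K_def field_simps)
  qed
  have "(\<lambda>d::nat. (d + \<bar>L a\<bar>) / 2 ^ d) \<longlonglongrightarrow> 0"
    by real_asymp
  then show "(\<lambda>d. K * ((d + \<bar>L a\<bar>) / 2 ^ d)) \<longlonglongrightarrow> 0"
    by (intro tendsto_mult_right_zero)
qed

lemma normalized_tail_integrals_tendsto: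
  "(\<lambda>d. (LBINT x:{a..u d - window_radius d}. x ^ d * \<psi> x) / normalizer d) \<longlonglongrightarrow> 0"
  "(\<lambda>d. (LBINT x:{u d + window_radius d..}. x ^ d * \<psi> x) / normalizer d) \<longlonglongrightarrow> 0"
proof -
  have c: "(\<lambda>d. c / window_width d) \<longlonglongrightarrow> 0" for c
    using tendsto_mult_right_zero[OF tendsto_inverse_0_at_top[OF window_width_tendsto], of c]
    by (simp add: divide_inverse)
  have "eventually (\<lambda>d. \<bar>(LBINT x:{a..u d - window_radius d}. x ^ d * \<psi> x) / normalizer d\<bar> \<le> 2 / window_width d
      \<and> \<bar>(LBINT x:{u d + window_radius d..}. x ^ d * \<psi> x) / normalizer d\<bar> \<le> 8 / window_width d) sequentially"
    using eventually_window
  proof eventually_elim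
    case (elim d)
    interpret laplace_window \<psi> L a d "u d" "\<nu> d" "\<omega> d"
      by (fact elim)
    have N: "0 < peak * scale"
      using peak_pos scale_pos by simp
    have "0 \<le> (LBINT x:{a..u d - scale * width}. x ^ d * \<psi> x)"
      using psi_nonneg a_ge_1 by (intro set_integral_nonneg) auto
    moreover have "0 \<le> (LBINT x:{u d + scale * width..}. x ^ d * \<psi> x)"
    proof (intro set_integral_nonneg)
      have "0 < scale * width"
        using scale_pos width_ge by simp
      then have "0 \<le> u d + scale * width"
        using window_ends_ge a_ge_1 by linarith
      then show "0 \<le> x ^ d * \<psi> x" if "x \<in> {u d + scale * width..}" for x
        using that psi_nonneg by simp
    qed
    ultimately show ?case
      using left_tail_integral_le right_tail_integral_le N by (simp add: pos_divide_le_eq)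
  qed
  then have "eventually (\<lambda>d. norm ((LBINT x:{a..u d - window_radius d}. x ^ d * \<psi> x) / normalizer d)
      \<le> 2 / window_width d) sequentially"
    and "eventually (\<lambda>d. norm ((LBINT x:{u d + window_radius d..}. x ^ d * \<psi> x) / normalizer d)
      \<le> 8 / window_width d) sequentially"
    unfolding eventually_conj_iff real_norm_def by blast+
  then show "(\<lambda>d. (LBINT x:{a..u d - window_radius d}. x ^ d * \<psi> x) / normalizer d) \<longlonglongrightarrow> 0"
    and "(\<lambda>d. (LBINT x:{u d + window_radius d..}. x ^ d * \<psi> x) / normalizer d) \<longlonglongrightarrow> 0"
    by (blast intro: Lim_null_comparison[OF _ c])+
qed

theorem moments_asymp_equiv:
  "(\<lambda>d. LBINT x:{0..}. x ^ d * \<psi> x) \<sim>[sequentially] (\<lambda>d. sqrt (2 * pi / \<nu> d) * u d ^ (d + 1) * \<psi> (u d))"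
proof (rule asymp_equivI')
  let ?P = "\<lambda>A d. (LBINT x:A d. x ^ d * \<psi> x) / normalizer d"
  have "(\<lambda>d. (?P (\<lambda>_. {0..<a}) d + ?P (\<lambda>d. {a..u d - window_radius d}) d
      + integral\<^sup>L lborel (window_profile d) + ?P (\<lambda>d. {u d + window_radius d..}) d) / sqrt (2 * pi))
      \<longlonglongrightarrow> (0 + 0 + sqrt (2 * pi) + 0) / sqrt (2 * pi)"
    by (intro tendsto_intros normalized_initial_integral_tendsto normalized_tail_integrals_tendsto
        window_profile_integral_tendsto) simp
  moreover have "eventually (\<lambda>d. (?P (\<lambda>_. {0..<a}) d + ?P (\<lambda>d. {a..u d - window_radius d}) d
      + integral\<^sup>L lborel (window_profile d) + ?P (\<lambda>d. {u d + window_radius d..}) d) / sqrt (2 * pi)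
      = (LBINT x:{0..}. x ^ d * \<psi> x) / (sqrt (2 * pi / \<nu> d) * u d ^ (d + 1) * \<psi> (u d))) sequentially"
    using eventually_window
  proof eventually_elim
    case (elim d)
    interpret laplace_window \<psi> L a d "u d" "\<nu> d" "\<omega> d"
      by (fact elim)
    have "sqrt (2 * pi / \<nu> d) * u d ^ (d + 1) * \<psi> (u d) = sqrt (2 * pi) * (peak * scale)"
      using nu_pos by (simp add: peak_def scale_def real_sqrt_divide field_simps)
    moreover have "(LBINT x:{0..}. x ^ d * \<psi> x) = (LBINT x:{0..<a}. x ^ d * \<psi> x)
        + (LBINT x:{a..u d - scale * width}. x ^ d * \<psi> x) + peak * scale * integral\<^sup>L lborel profile
        + (LBINT x:{u d + scale * width..}. x ^ d * \<psi> x)"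
      using moment_split central_integral_eq by simp
    ultimately show ?case
      using peak_pos scale_pos by (simp add: field_simps)
  qed
  ultimately show "(\<lambda>d. (LBINT x:{0..}. x ^ d * \<psi> x) / (sqrt (2 * pi / \<nu> d) * u d ^ (d + 1) * \<psi> (u d)))
      \<longlonglongrightarrow> 1"
    by (simp add: Lim_transform_eventually)
qed

end

theorem proposition2:
  fixes \<psi> :: "real \<Rightarrow> real"
    and u\<^sub>d\<^sub>d :: real
    and \<Lambda>' :: "real \<Rightarrow> real"
    and L' :: "real \<Rightarrow> real"
    and u :: "nat \<Rightarrow> real"
    and \<omega> :: "nat \<Rightarrow> real"
  defines "\<Lambda> \<equiv> (\<lambda>x. - ln (\<psi> x))"
    and "L \<equiv> (\<lambda>x. x * \<Lambda>' x)"
    and "M \<equiv> (\<lambda>x. (x * \<Lambda>' x) / ln x)"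
    and "\<nu> \<equiv> (\<lambda>d. u d * L' (u d))"
  assumes psi_meas: "set_borel_measurable lborel {0..} \<psi>"
    and psi_nonneg: "\<forall>x\<ge>0. \<psi> x \<ge> 0"
    and moments_int: "\<forall>d::nat\<ge>1. set_integrable lborel {0..} (\<lambda>x. x ^ d * \<psi> x)"
    and moments_pos: "\<forall>d::nat\<ge>1. 0 < (LBINT x:{0..}. x ^ d * \<psi> x)"
    and not_compact_supp: "\<not> compact (closure {x\<in>{0..}. \<psi> x \<noteq> 0})"
    and psi_pos: "\<forall>x\<ge>u\<^sub>d\<^sub>d. \<psi> x > 0"
    and Lambda_deriv: "\<forall>x\<ge>u\<^sub>d\<^sub>d. (\<Lambda> has_real_derivative \<Lambda>' x) (at x within {u\<^sub>d\<^sub>d..})"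
    and L_mono: "mono_on {u\<^sub>d\<^sub>d..} L"
    and M_lim: "filterlim M at_top at_top"
    and M_limsup: "\<forall>\<epsilon>. 0 < \<epsilon> \<and> \<epsilon> < 1 \<longrightarrow>
        Limsup at_top (\<lambda>x. ereal (M ((1 - \<epsilon>) * x) / M x)) \<le> 1"
    and M_liminf: "\<forall>\<epsilon>. 0 < \<epsilon> \<and> \<epsilon> < 1 \<longrightarrow>
        Liminf at_top (\<lambda>x. ereal (M ((1 + \<epsilon>) * x) / M x)) \<ge> 1"
    and u_def: "eventually (\<lambda>d. u d \<ge> u\<^sub>d\<^sub>d \<and> L (u d) = real d) sequentially"
    and L_deriv: "\<forall>x\<ge>u\<^sub>d\<^sub>d. (L has_real_derivative L' x) (at x within {u\<^sub>d\<^sub>d..})"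
    and nu_lim: "filterlim \<nu> at_top sequentially"
    and omega_lim: "filterlim \<omega> at_top sequentially"
    and local_cond: "eventually (\<lambda>d. \<forall>\<epsilon>::real. \<epsilon>\<^sup>2 \<le> \<omega> d / \<nu> d \<longrightarrow>
        \<bar>L (u d) - L ((1 - \<epsilon>) * u d) - \<epsilon> * u d * L' (u d)\<bar> \<le> \<bar>\<epsilon>\<bar> * \<nu> d / \<omega> d) sequentially"
  shows "(\<lambda>d. LBINT x:{0..}. x ^ d * \<psi> x)
           \<sim>[sequentially] (\<lambda>d. sqrt (2 * pi / \<nu> d) * u d ^ (d + 1) * \<psi> (u d))"
proof -
  define a where "a = max (u\<^sub>d\<^sub>d + 1) 1"
  have a: "u\<^sub>d\<^sub>d < a" "1 \<le> a"
    by (auto simp: a_def)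
  have L_u: "eventually (\<lambda>d. L (u d) = real d) sequentially"
    using u_def by (rule eventually_mono) simp
  have u_top: "filterlim u at_top sequentially"
  proof (rule filterlim_at_top_of_mono_on_comp[OF L_mono])
    show "eventually (\<lambda>d. u\<^sub>d\<^sub>d \<le> u d) sequentially"
      using u_def by (rule eventually_mono) simp
    show "filterlim (\<lambda>d. L (u d)) at_top sequentially"
      by (rule filterlim_cong[OF refl refl L_u, THEN iffD2, OF filterlim_real_sequentially])
  qed
  have log_psi_deriv: "((\<lambda>x. ln (\<psi> x)) has_real_derivative - L x / x) (at x)" if "a \<le> x" for x
  proof -
    have "(\<Lambda> has_real_derivative \<Lambda>' x) (at x)"
      using Lambda_deriv[rule_format, of x] at_within_interior[of x "{u\<^sub>d\<^sub>d..}"] that a by simp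
    from DERIV_minus[OF this] show ?thesis
      using that a by (simp add: \<Lambda>_def L_def)
  qed
  interpret laplace_sequence \<psi> L a u \<nu> \<omega>
  proof
    show "mono_on {a..} L"
      using L_mono a by (auto intro: mono_on_subset)
    show "eventually (\<lambda>d. \<forall>\<epsilon>. \<epsilon>\<^sup>2 \<le> \<omega> d / \<nu> d \<longrightarrow>
        \<bar>L (u d) - L ((1 - \<epsilon>) * u d) - \<epsilon> * \<nu> d\<bar> \<le> \<bar>\<epsilon>\<bar> * \<nu> d / \<omega> d) sequentially"
      using local_cond by (simp add: \<nu>_def mult.assoc)
  qed (use psi_meas psi_nonneg psi_pos a moments_int log_psi_deriv u_top L_u nu_lim omega_lim in auto)
  show ?thesis
    by (rule moments_asymp_equiv)
qed

end
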